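(* Let $S$ be a left Ore set of a ring $R$. Then $S_c=\max(S)$, where $S_c:=\{s\in S:\ker(s\cdot)=\mathrm{ass}(S)\}$ is the core of $S$ and $\max(S):=\{s\in S:\ker(s\cdot)\text{ is a maximal element of the poset }(\{\ker(t\cdot):t\in S\},\subseteq)\}$.
   Context: All rings are associative with $1$. A multiplicative subset $S$ of $R$ ($1\in S$, $0\notin S$, closed under multiplication) is a left Ore set if $Sr\cap Rs\neq\emptyset$ for all $r\in R$, $s\in S$; for it, $\mathrm{ass}(S):=\{r\in R: sr=0\text{ for some } s\in S\}$. For $s\in R$, $\ker(s\cdot):=\{r\in R: sr=0\}$ is the kernel of left multiplication by $s$. *)

theory Defs
  imports Main
begin

definition mult_subset :: "'a::ring_1 set \<Rightarrow> bool" where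
  "mult_subset S \<longleftrightarrow> 1 \<in> S \<and> 0 \<notin> S \<and> (\<forall>s\<in>S. \<forall>t\<in>S. s * t \<in> S)"

definition left_ore_set :: "'a::ring_1 set \<Rightarrow> bool" where
  "left_ore_set S \<longleftrightarrow> mult_subset S \<and>
     (\<forall>r s. s \<in> S \<longrightarrow> (\<exists>s'\<in>S. \<exists>r'. s' * r = r' * s))"

definition ass :: "'a::ring_1 set \<Rightarrow> 'a set" where
  "ass S = {r. \<exists>s\<in>S. s * r = 0}"

definition lker :: "'a::ring_1 \<Rightarrow> 'a set" where
  "lker s = {r. s * r = 0}"

definition ore_core :: "'a::ring_1 set \<Rightarrow> 'a set" where
  "ore_core S = {s\<in>S. lker s = ass S}"

definition max_set :: "'a::ring_1 set \<Rightarrow> 'a set" where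
  "max_set S = {s\<in>S. \<forall>t\<in>S. lker s \<subseteq> lker t \<longrightarrow> lker t = lker s}"

end

theory Submission
  imports Defs
begin

text \<open>Every kernel lker t with t in S lies in ass S, so an element whose kernel equals ass S has a
  maximal kernel. Conversely, if r is killed by some t in S, the Ore condition gives s' * s = r' * t
  with s' in S; then s' * s also kills r, and since lker s is contained in lker (s' * s), maximality
  of lker s forces s * r = 0. Hence a maximal kernel contains, and so equals, ass S.\<close>

lemma lker_subset_ass: "t \<in> S \<Longrightarrow> lker t \<subseteq> ass S"
  by (auto simp: lker_def ass_def)

lemma lker_subset_lker_mult: "lker s \<subseteq> lker (t * s)"
  by (auto simp: lker_def mult.assoc)

lemma left_ore_set_mult_closed:
  "left_ore_set S \<Longrightarrow> s \<in> S \<Longrightarrow> t \<in> S \<Longrightarrow> s * t \<in> S"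
  unfolding left_ore_set_def mult_subset_def by blast

lemma left_ore_set_ass_annihilated_by_left_multiple:
  assumes "left_ore_set S" and "r \<in> ass S" and "s \<in> S"
  shows "\<exists>s'\<in>S. (s' * s) * r = 0"
proof -
  obtain t where t: "t \<in> S" "t * r = 0"
    using assms(2) by (auto simp: ass_def)
  obtain s' r' where "s' \<in> S" "s' * s = r' * t"
    using assms(1) t(1) unfolding left_ore_set_def by blast
  then show ?thesis
    using t(2) by (metis mult.assoc mult_zero_right)
qed

lemma ore_core_subset_max_set: "ore_core S \<subseteq> max_set S"
  using lker_subset_ass by (fastforce simp: ore_core_def max_set_def)

lemma max_set_subset_ore_core:
  assumes "left_ore_set S"
  shows "max_set S \<subseteq> ore_core S"
proof
  fix s assume "s \<in> max_set S"
  then have s: "s \<in> S"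
    and maximal: "\<And>t. t \<in> S \<Longrightarrow> lker s \<subseteq> lker t \<Longrightarrow> lker t = lker s"
    by (auto simp: max_set_def)
  have "ass S \<subseteq> lker s"
  proof
    fix r assume "r \<in> ass S"
    then obtain s' where s': "s' \<in> S" "(s' * s) * r = 0"
      using left_ore_set_ass_annihilated_by_left_multiple assms s by blast
    have "lker (s' * s) = lker s"
      using maximal left_ore_set_mult_closed[OF assms s'(1) s] lker_subset_lker_mult by blast
    then show "r \<in> lker s"
      using s'(2) by (auto simp: lker_def)
  qed
  with lker_subset_ass[OF s] s show "s \<in> ore_core S"
    by (auto simp: ore_core_def)
qed

theorem proposition4p4:
  fixes S :: "'a::ring_1 set"
  assumes "left_ore_set S"
  shows "ore_core S = max_set S"
  using ore_core_subset_max_set max_set_subset_ore_core[OF assms] by (rule equalityI)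

end
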